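(* Let $P$ be a finite poset and $X:P\to\mathcal{P}_{<\infty}$ a diagram of finite posets. If $p\in P$ is an up beat point of $P$, then $\operatorname{\underline{hocolim}} X$ collapses to $\operatorname{\underline{hocolim}} X|_{P\smallsetminus\{p\}}$. In particular, they are weak equivalent.
   Context: $P$ is viewed as a category with a unique arrow $p\to q$ iff $p\le q$; $\mathcal{P}_{<\infty}$ is the category of finite posets and order-preserving maps. Write $X_p=X(p)$, $f_{pq}=X(p\to q)$. $\operatorname{\underline{hocolim}} X$ is the poset on $\coprod_{p}X_p$ keeping the order within each $X_p$ and, for $x\in X_p$, $y\in X_q$, $p\le q$, setting $x\le y$ iff $f_{pq}(x)\le y$ in $X_q$. For a subposet $Q'\subseteq P$, $X|_{Q'}$ is the restricted diagram, and $\operatorname{\underline{hocolim}} X|_{Q'}$ is a subposet of $\operatorname{\underline{hocolim}} X$. For $x$ in a finite poset $Y$: $U_x=\{y\le x\}$, $\hat U_x=U_x\smallsetminus\{x\}$, $F_x=\{y\ge x\}$, $\hat F_x=F_x\smallsetminus\{x\}$. $x$ is an up beat point if $\hat F_x$ has a minimum, a down beat point if $\hat U_x$ has a maximum. A finite poset is contractible (dismantlable) if it can be reduced to a single point by removing beat points one at a time. $x$ is a down (resp. up) weak point if $\hat U_x$ (resp. $\hat F_x$) is contractible; removing a weak point is an elementary collapse, and $Y$ collapses to $Z$ if $Z$ is obtained from $Y$ by a sequence of elementary collapses. Two finite posets are weak equivalent if their order complexes (simplicial complexes of nonempty chains) are homotopy equivalent. *)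

theory Defs
  imports "HOL-Analysis.Analysis"
begin

definition finite_poset :: "'a set \<Rightarrow> ('a \<Rightarrow> 'a \<Rightarrow> bool) \<Rightarrow> bool" where
  "finite_poset S le \<longleftrightarrow> finite S \<and> (\<forall>x\<in>S. le x x)
     \<and> (\<forall>x\<in>S. \<forall>y\<in>S. le x y \<and> le y x \<longrightarrow> x = y)
     \<and> (\<forall>x\<in>S. \<forall>y\<in>S. \<forall>z\<in>S. le x y \<and> le y z \<longrightarrow> le x z)"

definition poset_diagram ::
  "'a set \<Rightarrow> ('a \<Rightarrow> 'a \<Rightarrow> bool) \<Rightarrow> ('a \<Rightarrow> 'b set) \<Rightarrow> ('a \<Rightarrow> 'b \<Rightarrow> 'b \<Rightarrow> bool)
   \<Rightarrow> ('a \<Rightarrow> 'a \<Rightarrow> 'b \<Rightarrow> 'b) \<Rightarrow> bool" where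
  "poset_diagram P le X leX f \<longleftrightarrow>
     (\<forall>p\<in>P. finite_poset (X p) (leX p))
   \<and> (\<forall>p\<in>P. \<forall>q\<in>P. le p q \<longrightarrow>
        (\<forall>x\<in>X p. f p q x \<in> X q)
      \<and> (\<forall>x\<in>X p. \<forall>y\<in>X p. leX p x y \<longrightarrow> leX q (f p q x) (f p q y)))
   \<and> (\<forall>p\<in>P. \<forall>x\<in>X p. f p p x = x)
   \<and> (\<forall>p\<in>P. \<forall>q\<in>P. \<forall>r\<in>P. le p q \<and> le q r \<longrightarrow> (\<forall>x\<in>X p. f q r (f p q x) = f p r x))"

text \<open>The Grothendieck-type construction: carrier of hocolim X restricted to Q.\<close>
definition hocolim_carrier :: "'a set \<Rightarrow> ('a \<Rightarrow> 'b set) \<Rightarrow> ('a \<times> 'b) set" where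
  "hocolim_carrier Q X = {(p, x). p \<in> Q \<and> x \<in> X p}"

text \<open>Order of hocolim X: (p,x) \<le> (q,y) iff p \<le> q and f p q x \<le> y in X q.
(For p = q this is the order of X p, since f p p is the identity.)\<close>
definition hocolim_le ::
  "('a \<Rightarrow> 'a \<Rightarrow> bool) \<Rightarrow> ('a \<Rightarrow> 'b \<Rightarrow> 'b \<Rightarrow> bool) \<Rightarrow> ('a \<Rightarrow> 'a \<Rightarrow> 'b \<Rightarrow> 'b)
   \<Rightarrow> ('a \<times> 'b) \<Rightarrow> ('a \<times> 'b) \<Rightarrow> bool" where
  "hocolim_le le leX f u v \<longleftrightarrow> le (fst u) (fst v) \<and> leX (fst v) (f (fst u) (fst v) (snd u)) (snd v)"

definition up_beat_point :: "('a \<Rightarrow> 'a \<Rightarrow> bool) \<Rightarrow> 'a set \<Rightarrow> 'a \<Rightarrow> bool" where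
  "up_beat_point le S x \<longleftrightarrow>
     (\<exists>m\<in>{y\<in>S. le x y \<and> y \<noteq> x}. \<forall>y\<in>{y\<in>S. le x y \<and> y \<noteq> x}. le m y)"

definition down_beat_point :: "('a \<Rightarrow> 'a \<Rightarrow> bool) \<Rightarrow> 'a set \<Rightarrow> 'a \<Rightarrow> bool" where
  "down_beat_point le S x \<longleftrightarrow>
     (\<exists>m\<in>{y\<in>S. le y x \<and> y \<noteq> x}. \<forall>y\<in>{y\<in>S. le y x \<and> y \<noteq> x}. le y m)"

text \<open>Contractible (dismantlable): reducible to a single point by removing beat points one at a time.\<close>
inductive contractible_poset :: "('a \<Rightarrow> 'a \<Rightarrow> bool) \<Rightarrow> 'a set \<Rightarrow> bool" for le where
  single: "contractible_poset le {x}"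
| remove: "\<lbrakk>x \<in> S; up_beat_point le S x \<or> down_beat_point le S x;
            contractible_poset le (S - {x})\<rbrakk> \<Longrightarrow> contractible_poset le S"

definition weak_point :: "('a \<Rightarrow> 'a \<Rightarrow> bool) \<Rightarrow> 'a set \<Rightarrow> 'a \<Rightarrow> bool" where
  "weak_point le S x \<longleftrightarrow>
     contractible_poset le {y\<in>S. le y x \<and> y \<noteq> x}
   \<or> contractible_poset le {y\<in>S. le x y \<and> y \<noteq> x}"

inductive collapses :: "('a \<Rightarrow> 'a \<Rightarrow> bool) \<Rightarrow> 'a set \<Rightarrow> 'a set \<Rightarrow> bool" for le where
  refl: "collapses le Y Y"
| step: "\<lbrakk>x \<in> Y; weak_point le Y x; collapses le (Y - {x}) Z\<rbrakk> \<Longrightarrow> collapses le Y Z"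

text \<open>Geometric realization of the order complex of (S, le): barycentric-coordinate functions
supported on a chain of S, with the subspace topology of the product topology on 'a \<Rightarrow> real.\<close>
definition order_complex_realization :: "('a \<Rightarrow> 'a \<Rightarrow> bool) \<Rightarrow> 'a set \<Rightarrow> ('a \<Rightarrow> real) set" where
  "order_complex_realization le S =
     {g. (\<forall>v. 0 \<le> g v) \<and> {v. g v \<noteq> 0} \<subseteq> S
       \<and> (\<forall>v\<in>{v. g v \<noteq> 0}. \<forall>w\<in>{v. g v \<noteq> 0}. le v w \<or> le w v)
       \<and> sum g S = 1}"

definition weak_equivalent ::
  "('a \<Rightarrow> 'a \<Rightarrow> bool) \<Rightarrow> 'a set \<Rightarrow> ('c \<Rightarrow> 'c \<Rightarrow> bool) \<Rightarrow> 'c set \<Rightarrow> bool" where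
  "weak_equivalent le S le' S' \<longleftrightarrow>
     top_of_set (order_complex_realization le S)
       homotopy_equivalent_space top_of_set (order_complex_realization le' S')"

end

theory Submission
  imports Defs
begin

(* Let q be the least element of P strictly above p. Remove the points (p, x) of hocolim X one at
   a time, always a maximal remaining one in the fibre over p. Such a point is an up beat point of
   the current subposet: an element strictly above it lies either over p, which maximality
   excludes, or over some r > p, hence r \<ge> q, and then it lies above (q, f p q x).
   An up beat point is a weak point, because its punctured up-set has a least element and is
   therefore dismantlable. Removing it is also a homotopy equivalence of order complexes: the
   straight-line homotopy that shifts the barycentric weight of x onto the least element m above
   it stays inside the realization, since every vertex comparable with x is comparable with m. *)

lemma finite_poset_subset: "finite_poset S le \<Longrightarrow> T \<subseteq> S \<Longrightarrow> finite_poset T le"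
  unfolding finite_poset_def by (meson finite_subset subsetD)

lemma finite_poset_converse: "finite_poset S le \<Longrightarrow> finite_poset S (\<lambda>x y. le y x)"
  unfolding finite_poset_def by blast

lemma finite_poset_obtains_minimal:
  assumes "finite_poset S le" "T \<subseteq> S" "T \<noteq> {}"
  obtains x where "x \<in> T" "\<And>y. y \<in> T \<Longrightarrow> le y x \<Longrightarrow> y = x"
proof -
  have "finite T"
    using assms(1,2) finite_subset unfolding finite_poset_def by blast
  then have "\<exists>x\<in>T. \<forall>y\<in>T. le y x \<longrightarrow> y = x"
    using assms(3,2)
  proof (induction T rule: finite_ne_induct)
    case (singleton a)
    then show ?case by simp
  next
    case (insert a T)
    then obtain x where x: "x \<in> T" "\<forall>y\<in>T. le y x \<longrightarrow> y = x" by auto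
    have "a \<in> S" "x \<in> S" "T \<subseteq> S" using insert.prems x(1) by auto
    show ?case
    proof (cases "le a x")
      case True
      have "y = a" if "y \<in> insert a T" "le y a" for y
      proof (rule ccontr)
        assume "y \<noteq> a"
        with that have "y \<in> T" "y \<in> S" using \<open>T \<subseteq> S\<close> by auto
        with \<open>le y a\<close> True \<open>a \<in> S\<close> \<open>x \<in> S\<close> assms(1) have "le y x"
          unfolding finite_poset_def by blast
        with x \<open>y \<in> T\<close> have "y = x" by blast
        with \<open>le y a\<close> True \<open>a \<in> S\<close> \<open>x \<in> S\<close> assms(1) have "a = x"
          unfolding finite_poset_def by blast
        with x(1) \<open>a \<notin> T\<close> show False by simp
      qed
      then show ?thesis by blast
    next
      case False
      with x show ?thesis by auto
    qed
  qed
  then show thesis using that by blast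
qed

lemma finite_poset_obtains_maximal:
  assumes "finite_poset S le" "T \<subseteq> S" "T \<noteq> {}"
  obtains x where "x \<in> T" "\<And>y. y \<in> T \<Longrightarrow> le x y \<Longrightarrow> y = x"
  using finite_poset_obtains_minimal[OF finite_poset_converse[OF assms(1)] assms(2,3)] by blast

lemma contractible_poset_if_least:
  assumes "finite_poset S le" "m \<in> S" "\<And>y. y \<in> S \<Longrightarrow> le m y"
  shows "contractible_poset le S"
proof -
  have "finite (S - {m})" using assms(1) unfolding finite_poset_def by simp
  then have "contractible_poset le (insert m (S - {m}))"
  proof (induction rule: finite_remove_induct)
    case empty
    then show ?case by (simp add: contractible_poset.single)
  next
    case (remove A)
    obtain x where x: "x \<in> A" and xmin: "\<And>y. y \<in> A \<Longrightarrow> le y x \<Longrightarrow> y = x"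
      using finite_poset_obtains_minimal[OF assms(1), of A] remove.hyps by blast
    have "m \<noteq> x" using x remove.hyps(3) by blast
    have "down_beat_point le (insert m A) x"
      unfolding down_beat_point_def
    proof (intro bexI ballI)
      show "m \<in> {y \<in> insert m A. le y x \<and> y \<noteq> x}"
        using assms(3) x remove.hyps(3) \<open>m \<noteq> x\<close> by auto
      show "le y m" if "y \<in> {y \<in> insert m A. le y x \<and> y \<noteq> x}" for y
        using that xmin assms(2,3) by auto
    qed
    moreover have "insert m A - {x} = insert m (A - {x})" using \<open>m \<noteq> x\<close> by blast
    ultimately show ?case
      using contractible_poset.remove[of x "insert m A"] remove.IH[OF x] x by simp
  qed
  then show ?thesis using assms(2) by (simp add: insert_absorb)
qed

lemma weak_point_if_up_beat_point:
  assumes "finite_poset S le" "up_beat_point le S x"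
  shows "weak_point le S x"
proof -
  obtain m where "m \<in> {y\<in>S. le x y \<and> y \<noteq> x}" "\<forall>y\<in>{y\<in>S. le x y \<and> y \<noteq> x}. le m y"
    using assms(2) unfolding up_beat_point_def by blast
  then have "contractible_poset le {y\<in>S. le x y \<and> y \<noteq> x}"
    by (intro contractible_poset_if_least[OF finite_poset_subset[OF assms(1)]]) auto
  then show ?thesis unfolding weak_point_def by blast
qed

lemma order_complex_realization_subset_iff:
  assumes "finite S" "T \<subseteq> S"
  shows "g \<in> order_complex_realization le T \<longleftrightarrow>
         g \<in> order_complex_realization le S \<and> {v. g v \<noteq> 0} \<subseteq> T"
proof -
  have "sum g T = sum g S" if "{v. g v \<noteq> 0} \<subseteq> T"
    using that assms by (intro sum.mono_neutral_left) auto
  then show ?thesis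
    using assms(2) unfolding order_complex_realization_def by auto
qed

definition shift_weight :: "'a \<Rightarrow> 'a \<Rightarrow> ('a \<Rightarrow> real) \<Rightarrow> ('a \<Rightarrow> real)" where
  "shift_weight x m g = g(x := 0, m := g m + g x)"

lemma continuous_on_shift_weight_apply:
  fixes h :: "'c::topological_space \<Rightarrow> 'a \<Rightarrow> real"
  assumes "\<And>w. continuous_on S (\<lambda>z. h z w)"
  shows "continuous_on S (\<lambda>z. shift_weight x m (h z) v)"
  unfolding shift_weight_def fun_upd_apply
  by (cases "v = m"; cases "v = x") (auto intro!: continuous_intros assms)

lemma continuous_on_shift_weight: "continuous_on S (shift_weight x m)"
  by (intro continuous_on_coordinatewise_then_product continuous_on_shift_weight_apply
      continuous_on_subset[OF continuous_on_product_coordinates] subset_UNIV)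

lemma sum_shift_weight:
  assumes "finite S" "x \<in> S" "m \<in> S" "m \<noteq> x"
  shows "sum (shift_weight x m g) S = sum g S"
proof -
  have "sum (shift_weight x m g) S = sum (shift_weight x m g) (S - {x} - {m}) + g m + g x"
    using assms by (simp add: sum.remove shift_weight_def)
  also have "sum (shift_weight x m g) (S - {x} - {m}) = sum g (S - {x} - {m})"
    by (rule sum.cong) (auto simp: shift_weight_def)
  also have "\<dots> + g m + g x = sum g S"
    using assms by (simp add: sum.remove)
  finally show ?thesis .
qed

lemma shift_weight_homotopy_in_realization:
  assumes S: "finite_poset S le" and x: "x \<in> S" and m: "m \<in> S" "m \<noteq> x" "le x m"
    and least: "\<And>y. y \<in> S \<Longrightarrow> le x y \<Longrightarrow> y \<noteq> x \<Longrightarrow> le m y"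
    and g: "g \<in> order_complex_realization le S" and t: "t \<in> {0..1}"
  shows "(\<lambda>v. (1 - t) * g v + t * shift_weight x m g v) \<in> order_complex_realization le S"
proof -
  define h where "h = (\<lambda>v. (1 - t) * g v + t * shift_weight x m g v)"
  have g0: "\<And>v. 0 \<le> g v" and gS: "{v. g v \<noteq> 0} \<subseteq> S"
    and g_chain: "\<And>v w. g v \<noteq> 0 \<Longrightarrow> g w \<noteq> 0 \<Longrightarrow> le v w \<or> le w v"
    and g1: "sum g S = 1"
    using g unfolding order_complex_realization_def by auto
  have le_refl: "\<And>y. y \<in> S \<Longrightarrow> le y y"
    and le_trans: "\<And>a b c. a \<in> S \<Longrightarrow> b \<in> S \<Longrightarrow> c \<in> S \<Longrightarrow> le a b \<Longrightarrow> le b c \<Longrightarrow> le a c"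
    using S unfolding finite_poset_def by blast+
  have h_nonneg: "0 \<le> h v" for v
    using t g0 by (auto simp: h_def shift_weight_def intro!: add_nonneg_nonneg mult_nonneg_nonneg)
  have h_support: "g v \<noteq> 0 \<or> (v = m \<and> g x \<noteq> 0)" if "h v \<noteq> 0" for v
    using that by (auto simp: h_def shift_weight_def split: if_splits)
  have comparable_m: "le u m \<or> le m u" if "g u \<noteq> 0" "g x \<noteq> 0" for u
  proof -
    have "u \<in> S" using gS that(1) by auto
    from g_chain[OF that] show ?thesis
      using le_trans[OF \<open>u \<in> S\<close> x m(1)] least[OF \<open>u \<in> S\<close>] m(3) by auto
  qed
  have h_chain: "le v w \<or> le w v" if "h v \<noteq> 0" "h w \<noteq> 0" for v w
    using h_support[OF that(1)] h_support[OF that(2)] g_chain comparable_m le_refl[OF m(1)]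
    by blast
  have "sum h S = (1 - t) * sum g S + t * sum (shift_weight x m g) S"
    by (simp add: h_def sum.distrib sum_distrib_left)
  also have "\<dots> = 1"
    using sum_shift_weight[OF _ x m(1,2)] S g1 unfolding finite_poset_def by simp
  finally have "sum h S = 1" .
  moreover have "{v. h v \<noteq> 0} \<subseteq> S" using h_support gS m(1) by auto
  ultimately show ?thesis
    using h_nonneg h_chain unfolding h_def order_complex_realization_def by auto
qed

lemma weak_equivalent_remove_up_beat_point:
  assumes S: "finite_poset S le" and x: "x \<in> S" and "up_beat_point le S x"
  shows "weak_equivalent le S le (S - {x})"
proof -
  obtain m where m: "m \<in> S" "m \<noteq> x" "le x m"
    and least: "\<And>y. y \<in> S \<Longrightarrow> le x y \<Longrightarrow> y \<noteq> x \<Longrightarrow> le m y"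
    using assms(3) unfolding up_beat_point_def by auto
  define R where "R = order_complex_realization le S"
  define R' where "R' = order_complex_realization le (S - {x})"
  define H where "H = (\<lambda>(t, g). \<lambda>v. (1 - t) * g v + t * shift_weight x m g v)"
  have R': "g \<in> R' \<longleftrightarrow> g \<in> R \<and> g x = 0" for g
  proof -
    have "finite S" using S by (simp add: finite_poset_def)
    then show ?thesis
      using order_complex_realization_subset_iff[of S "S - {x}" g le]
      unfolding R_def R'_def order_complex_realization_def by auto
  qed
  have H_in: "H (t, g) \<in> R" if "t \<in> {0..1}" "g \<in> R" for t g
    using shift_weight_homotopy_in_realization[OF S x m least] that
    unfolding H_def R_def by simp
  have H_cont: "continuous_on ({0..1} \<times> R) H"
  proof -
    have coord: "continuous_on ({0..1} \<times> R) (\<lambda>z. snd z w)" for w :: 'a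
      by (rule continuous_on_compose2[OF continuous_on_product_coordinates continuous_on_snd]) auto
    show ?thesis
      unfolding H_def case_prod_beta
      by (intro continuous_on_coordinatewise_then_product continuous_intros
          continuous_on_shift_weight_apply coord)
  qed
  have "homotopic_with (\<lambda>_. True) (top_of_set R) (top_of_set R) id (shift_weight x m)"
    unfolding homotopic_with_def
    using H_cont H_in by (intro exI[of _ H]) (auto simp: H_def continuous_map_in_subtopology)
  then have "homotopic_with (\<lambda>_. True) (top_of_set R) (top_of_set R) (shift_weight x m) id"
    by (simp add: homotopic_with_sym)
  moreover have "retraction_maps (top_of_set R) (top_of_set R') (shift_weight x m) id"
  proof -
    have "shift_weight x m g \<in> R'" if "g \<in> R" for g
    proof -
      have "H (1, g) = shift_weight x m g" by (simp add: H_def)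
      then show ?thesis
        using H_in[OF _ that, of 1] m(2) unfolding R' by (simp add: shift_weight_def)
    qed
    moreover have "shift_weight x m g = g" if "g \<in> R'" for g
      using that unfolding R' by (auto simp: shift_weight_def)
    ultimately show ?thesis
      unfolding retraction_maps_def using R'
      by (auto simp: continuous_map_in_subtopology continuous_on_shift_weight)
  qed
  ultimately show ?thesis
    unfolding weak_equivalent_def R_def[symmetric] R'_def[symmetric]
    by (rule deformation_retract_imp_homotopy_equivalent_space)
qed

lemma dismantle_by_up_beat_points:
  assumes Y: "finite_poset Y le" and "Z \<subseteq> Y"
    and beat: "\<And>W. Z \<subset> W \<Longrightarrow> W \<subseteq> Y \<Longrightarrow> \<exists>x\<in>W - Z. up_beat_point le W x"
  shows "collapses le Y Z \<and> weak_equivalent le Y le Z"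
proof -
  have "finite (Y - Z)" using Y unfolding finite_poset_def by simp
  then have "collapses le (Z \<union> (Y - Z)) Z \<and> weak_equivalent le (Z \<union> (Y - Z)) le Z"
  proof (induction rule: finite_remove_induct)
    case empty
    then show ?case
      by (simp add: collapses.refl weak_equivalent_def homotopy_equivalent_space_refl)
  next
    case (remove A)
    have "Z \<subset> Z \<union> A" "Z \<union> A \<subseteq> Y" using remove.hyps(2,3) \<open>Z \<subseteq> Y\<close> by auto
    then obtain x where x: "x \<in> A" and x_beat: "up_beat_point le (Z \<union> A) x"
      using beat by blast
    have Z_A: "finite_poset (Z \<union> A) le" using finite_poset_subset[OF Y \<open>Z \<union> A \<subseteq> Y\<close>] .
    have remove_x: "Z \<union> A - {x} = Z \<union> (A - {x})" using x remove.hyps(3) by blast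
    have "collapses le (Z \<union> A) Z"
      using collapses.step[OF _ weak_point_if_up_beat_point[OF Z_A x_beat]] remove.IH[OF x] x
      unfolding remove_x by blast
    moreover have "weak_equivalent le (Z \<union> A) le Z"
      using weak_equivalent_remove_up_beat_point[OF Z_A _ x_beat] remove.IH[OF x] x
      unfolding remove_x weak_equivalent_def by (blast intro: homotopy_eqv_trans)
    ultimately show ?case by blast
  qed
  then show ?thesis using \<open>Z \<subseteq> Y\<close> by (simp add: Un_absorb1)
qed

lemma finite_poset_hocolim:
  assumes P: "finite_poset P le" and D: "poset_diagram P le X leX f"
  shows "finite_poset (hocolim_carrier P X) (hocolim_le le leX f)"
proof -
  have fpX: "\<And>p. p \<in> P \<Longrightarrow> finite_poset (X p) (leX p)"
    and f_in: "\<And>p q x. p \<in> P \<Longrightarrow> q \<in> P \<Longrightarrow> le p q \<Longrightarrow> x \<in> X p \<Longrightarrow> f p q x \<in> X q"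
    and f_mono: "\<And>p q x y. p \<in> P \<Longrightarrow> q \<in> P \<Longrightarrow> le p q \<Longrightarrow> x \<in> X p \<Longrightarrow> y \<in> X p
                  \<Longrightarrow> leX p x y \<Longrightarrow> leX q (f p q x) (f p q y)"
    and f_id: "\<And>p x. p \<in> P \<Longrightarrow> x \<in> X p \<Longrightarrow> f p p x = x"
    and f_comp: "\<And>p q r x. p \<in> P \<Longrightarrow> q \<in> P \<Longrightarrow> r \<in> P \<Longrightarrow> le p q \<Longrightarrow> le q r \<Longrightarrow> x \<in> X p
                  \<Longrightarrow> f q r (f p q x) = f p r x"
    using D unfolding poset_diagram_def by blast+
  have le_refl: "\<And>p. p \<in> P \<Longrightarrow> le p p"
    and le_antisym: "\<And>p q. p \<in> P \<Longrightarrow> q \<in> P \<Longrightarrow> le p q \<Longrightarrow> le q p \<Longrightarrow> p = q"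
    and le_trans: "\<And>p q r. p \<in> P \<Longrightarrow> q \<in> P \<Longrightarrow> r \<in> P \<Longrightarrow> le p q \<Longrightarrow> le q r \<Longrightarrow> le p r"
    using P unfolding finite_poset_def by blast+
  have leX_refl: "\<And>p x. p \<in> P \<Longrightarrow> x \<in> X p \<Longrightarrow> leX p x x"
    and leX_antisym: "\<And>p x y. p \<in> P \<Longrightarrow> x \<in> X p \<Longrightarrow> y \<in> X p \<Longrightarrow> leX p x y \<Longrightarrow> leX p y x \<Longrightarrow> x = y"
    and leX_trans: "\<And>p x y z. p \<in> P \<Longrightarrow> x \<in> X p \<Longrightarrow> y \<in> X p \<Longrightarrow> z \<in> X p
                     \<Longrightarrow> leX p x y \<Longrightarrow> leX p y z \<Longrightarrow> leX p x z"
    using fpX unfolding finite_poset_def by blast+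
  have carrier: "hocolim_carrier P X = Sigma P X"
    unfolding hocolim_carrier_def by auto
  have "finite (Sigma P X)"
    using P fpX by (intro finite_SigmaI) (auto simp: finite_poset_def)
  moreover have "hocolim_le le leX f (p, x) (p, x)" if "p \<in> P" "x \<in> X p" for p x
    using that le_refl leX_refl f_id by (simp add: hocolim_le_def)
  moreover have "(p, x) = (q, y)"
    if "p \<in> P" "x \<in> X p" "q \<in> P" "y \<in> X q"
      and "hocolim_le le leX f (p, x) (q, y)" "hocolim_le le leX f (q, y) (p, x)" for p x q y
  proof -
    have "p = q" using that le_antisym unfolding hocolim_le_def by simp
    then show ?thesis
      using that leX_antisym[of p x y] f_id unfolding hocolim_le_def by simp
  qed
  moreover have "hocolim_le le leX f (p, x) (r, z)"
    if "p \<in> P" "x \<in> X p" "q \<in> P" "y \<in> X q" "r \<in> P" "z \<in> X r"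
      and "hocolim_le le leX f (p, x) (q, y)" "hocolim_le le leX f (q, y) (r, z)" for p x q y r z
  proof -
    have pq: "le p q" and qr: "le q r" and xy: "leX q (f p q x) y" and yz: "leX r (f q r y) z"
      using that unfolding hocolim_le_def by auto
    have pr: "le p r" using le_trans[OF that(1,3,5) pq qr] .
    have "leX r (f q r (f p q x)) (f q r y)"
      using f_mono[OF that(3,5) qr f_in[OF that(1,3) pq that(2)] that(4) xy] .
    then have "leX r (f p r x) z"
      unfolding f_comp[OF that(1,3,5) pq qr that(2)]
      using leX_trans[OF that(5) f_in[OF that(1,5) pr that(2)] f_in[OF that(3,5) qr that(4)]
          that(6)] yz
      by blast
    with pr show ?thesis unfolding hocolim_le_def by simp
  qed
  ultimately show ?thesis
    unfolding finite_poset_def carrier by (intro conjI ballI impI; clarify; blast)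
qed

lemma up_beat_point_hocolim:
  assumes D: "poset_diagram P le X leX f" and p: "p \<in> P" "up_beat_point le P p"
    and W: "hocolim_carrier (P - {p}) X \<subseteq> W" "W \<subseteq> hocolim_carrier P X"
    and x: "(p, x) \<in> W"
    and x_max: "\<And>y. (p, y) \<in> W \<Longrightarrow> hocolim_le le leX f (p, x) (p, y) \<Longrightarrow> y = x"
  shows "up_beat_point (hocolim_le le leX f) W (p, x)"
proof -
  obtain q where q: "q \<in> P" "le p q" "q \<noteq> p"
    and q_least: "\<And>r. r \<in> P \<Longrightarrow> le p r \<Longrightarrow> r \<noteq> p \<Longrightarrow> le q r"
    using p(2) unfolding up_beat_point_def by auto
  have xX: "x \<in> X p" using W(2) x unfolding hocolim_carrier_def by auto
  have "f p q x \<in> X q" and "leX q (f p q x) (f p q x)"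
    and f_comp: "\<And>r. r \<in> P \<Longrightarrow> le q r \<Longrightarrow> f q r (f p q x) = f p r x"
    using D p(1) q xX unfolding poset_diagram_def finite_poset_def by blast+
  then have "(q, f p q x) \<in> {u \<in> W. hocolim_le le leX f (p, x) u \<and> u \<noteq> (p, x)}"
    using W(1) q unfolding hocolim_carrier_def hocolim_le_def by auto
  moreover have "hocolim_le le leX f (q, f p q x) u"
    if "u \<in> W" "hocolim_le le leX f (p, x) u" "u \<noteq> (p, x)" for u
  proof -
    obtain r z where u: "u = (r, z)" by fastforce
    have "r \<noteq> p" using x_max that unfolding u by blast
    moreover have "r \<in> P" using W(2) that(1) unfolding u hocolim_carrier_def by auto
    ultimately have "le q r" using q_least that(2) unfolding u hocolim_le_def by simp
    then show ?thesis
      using f_comp[OF \<open>r \<in> P\<close>] that(2) unfolding u hocolim_le_def by simp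
  qed
  ultimately show ?thesis unfolding up_beat_point_def by blast
qed

theorem proposition2p4:
  fixes P :: "'a set" and le :: "'a \<Rightarrow> 'a \<Rightarrow> bool"
    and X :: "'a \<Rightarrow> 'b set" and leX :: "'a \<Rightarrow> 'b \<Rightarrow> 'b \<Rightarrow> bool"
    and f :: "'a \<Rightarrow> 'a \<Rightarrow> 'b \<Rightarrow> 'b" and p :: 'a
  assumes "finite_poset P le"
    and "poset_diagram P le X leX f"
    and "p \<in> P"
    and "up_beat_point le P p"
  shows "collapses (hocolim_le le leX f) (hocolim_carrier P X) (hocolim_carrier (P - {p}) X)
       \<and> weak_equivalent (hocolim_le le leX f) (hocolim_carrier P X)
                         (hocolim_le le leX f) (hocolim_carrier (P - {p}) X)"
proof (rule dismantle_by_up_beat_points)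
  let ?le = "hocolim_le le leX f"
    and ?Y = "hocolim_carrier P X" and ?Z = "hocolim_carrier (P - {p}) X"
  show Y: "finite_poset ?Y ?le" using finite_poset_hocolim assms(1,2) .
  show "?Z \<subseteq> ?Y" unfolding hocolim_carrier_def by auto
  fix W assume "?Z \<subset> W" "W \<subseteq> ?Y"
  then obtain u where u: "u \<in> W - ?Z" and u_max: "\<And>v. v \<in> W - ?Z \<Longrightarrow> ?le u v \<Longrightarrow> v = u"
    using finite_poset_obtains_maximal[OF Y, of "W - ?Z"] by blast
  then obtain x where x: "u = (p, x)"
    using \<open>W \<subseteq> ?Y\<close> unfolding hocolim_carrier_def by auto
  have "up_beat_point ?le W (p, x)"
  proof (rule up_beat_point_hocolim[OF assms(2-4)])
    show "y = x" if "(p, y) \<in> W" "?le (p, x) (p, y)" for y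
      using u_max[of "(p, y)"] that unfolding x hocolim_carrier_def by auto
  qed (use \<open>?Z \<subset> W\<close> \<open>W \<subseteq> ?Y\<close> u x in auto)
  with u x show "\<exists>u\<in>W - ?Z. up_beat_point ?le W u" by blast
qed

end
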